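(* Let $c_2,e_3,d_4$ be general homogeneous polynomials in $(u,v)$ of degrees $2,3,4$. The quartic surface $$\mathcal{K}\colon\ (w^2-uv)\,y^2 = c_2(u,v)w^2 + e_3(u,v)w + d_4(u,v)$$ in $\mathbb{P}^3=\mathbb{P}(u,v,w,y)$ has two rational double point singularities of type $\mathbf{A}_1$, at $\mathrm{p}_1=[0:0:0:1]$ and $\mathrm{p}_2=[0:0:1:0]$. *)

theory Defs
  imports "HOL-Analysis.Analysis"
begin

text \<open>Points of P^3 = P(u,v,w,y) are represented by nonzero vectors in complex^4,
  with coordinates u = x$1, v = x$2, w = x$3, y = x$4.\<close>

definition coord_u :: "complex^4 \<Rightarrow> complex" where "coord_u x = x $ 1"
definition coord_v :: "complex^4 \<Rightarrow> complex" where "coord_v x = x $ 2"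
definition coord_w :: "complex^4 \<Rightarrow> complex" where "coord_w x = x $ 3"
definition coord_y :: "complex^4 \<Rightarrow> complex" where "coord_y x = x $ 4"

definition bform :: "(nat \<Rightarrow> complex) \<Rightarrow> nat \<Rightarrow> complex \<Rightarrow> complex \<Rightarrow> complex" where
  "bform c n u v = (\<Sum>i\<le>n. c i * u ^ i * v ^ (n - i))"

definition c2 :: "(nat \<Rightarrow> complex) \<Rightarrow> complex \<Rightarrow> complex \<Rightarrow> complex" where
  "c2 a = bform (\<lambda>i. a i) 2"
definition e3 :: "(nat \<Rightarrow> complex) \<Rightarrow> complex \<Rightarrow> complex \<Rightarrow> complex" where
  "e3 a = bform (\<lambda>i. a (3 + i)) 3"
definition d4 :: "(nat \<Rightarrow> complex) \<Rightarrow> complex \<Rightarrow> complex \<Rightarrow> complex" where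
  "d4 a = bform (\<lambda>i. a (7 + i)) 4"

definition quarticK :: "(nat \<Rightarrow> complex) \<Rightarrow> complex^4 \<Rightarrow> complex" where
  "quarticK a x =
     ((coord_w x)^2 - coord_u x * coord_v x) * (coord_y x)^2
     - (c2 a (coord_u x) (coord_v x) * (coord_w x)^2
        + e3 a (coord_u x) (coord_v x) * coord_w x + d4 a (coord_u x) (coord_v x))"

definition p1 :: "complex^4" where "p1 = (\<chi> i. if i = 4 then 1 else 0)"
definition p2 :: "complex^4" where "p2 = (\<chi> i. if i = 3 then 1 else 0)"

definition pderiv4 :: "(complex^4 \<Rightarrow> complex) \<Rightarrow> 4 \<Rightarrow> complex^4 \<Rightarrow> complex" where
  "pderiv4 G i x = deriv (\<lambda>t. G (x + t *s axis i 1)) 0"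

definition hessian4 :: "(complex^4 \<Rightarrow> complex) \<Rightarrow> complex^4 \<Rightarrow> complex^4^4" where
  "hessian4 G x = (\<chi> i j. pderiv4 (pderiv4 G j) i x)"

definition sing_point :: "(complex^4 \<Rightarrow> complex) \<Rightarrow> complex^4 \<Rightarrow> bool" where
  "sing_point G x \<longleftrightarrow> x \<noteq> 0 \<and> G x = 0 \<and> (\<forall>i. pderiv4 G i x = 0)"

text \<open>A_1 (ordinary double point / node) of a surface G = 0 in P^3: a singular point whose
  tangent cone is a nondegenerate quadric, i.e. the 4x4 Hessian of the homogeneous form
  has rank 3 (corank 1, the kernel being spanned by the point itself).\<close>
definition A1_point :: "(complex^4 \<Rightarrow> complex) \<Rightarrow> complex^4 \<Rightarrow> bool" where
  "A1_point G x \<longleftrightarrow> sing_point G x \<and> rank (hessian4 G x) = 3"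

text \<open>Polynomial functions of the coefficients (used to express "general").\<close>
inductive_set polyfun :: "((nat \<Rightarrow> complex) \<Rightarrow> complex) set" where
  pf_const: "(\<lambda>a. c) \<in> polyfun"
| pf_var: "(\<lambda>a. a i) \<in> polyfun"
| pf_add: "P \<in> polyfun \<Longrightarrow> Q \<in> polyfun \<Longrightarrow> (\<lambda>a. P a + Q a) \<in> polyfun"
| pf_mult: "P \<in> polyfun \<Longrightarrow> Q \<in> polyfun \<Longrightarrow> (\<lambda>a. P a * Q a) \<in> polyfun"

end

(*
  The partial derivative of the quartic in y is 2 (w^2 - uv) y, so a singular point off the line
  u = v = 0 lies on the plane y = 0 or on the cone w^2 = uv. On y = 0 its (u, v) is a common zero
  of the two partial derivatives of the discriminant e3^2 - 4 c2 d4 of c2 w^2 + e3 w + d4 as a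
  quadratic in w, two binary quintics. On the cone, parametrised by (u, v, w) = (s^2, t^2, st),
  combinations of the partial derivatives in which y cancels give two binary forms of degree 7 with
  the common zero (s, t). For general coefficients both pairs have nonzero resultant, a polynomial
  in the coefficients, so neither case occurs; on u = v = 0 only p1 and p2 are singular. The
  Hessian has rank 3 at p1 always and at p2 when c2 has nonzero discriminant. The product of the
  three polynomials is not identically zero because each factor is nonzero at an explicit point.
*)

theory Submission
  imports Defs
begin

section \<open>Polynomial functions of the coefficients\<close>

lemma polyfun_sum:
  "finite S \<Longrightarrow> (\<And>x. x \<in> S \<Longrightarrow> f x \<in> polyfun) \<Longrightarrow> (\<lambda>a. \<Sum>x\<in>S. f x a) \<in> polyfun"
  by (induction S rule: finite_induct) (simp_all add: polyfun.intros)

lemma polyfun_prod: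
  "finite S \<Longrightarrow> (\<And>x. x \<in> S \<Longrightarrow> f x \<in> polyfun) \<Longrightarrow> (\<lambda>a. \<Prod>x\<in>S. f x a) \<in> polyfun"
  by (induction S rule: finite_induct) (simp_all add: polyfun.intros)

lemma polyfun_diff: "P \<in> polyfun \<Longrightarrow> Q \<in> polyfun \<Longrightarrow> (\<lambda>a. P a - Q a) \<in> polyfun"
  using polyfun.pf_add[OF _ polyfun.pf_mult[OF polyfun.pf_const, of Q "-1"], of P] by simp

lemma polyfun_power: "P \<in> polyfun \<Longrightarrow> (\<lambda>a. P a ^ k) \<in> polyfun"
  by (induction k) (simp_all add: polyfun.intros)

lemma polyfun_if: "P \<in> polyfun \<Longrightarrow> Q \<in> polyfun \<Longrightarrow> (\<lambda>a. if C then P a else Q a) \<in> polyfun"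
  by (cases C) simp_all

lemma polyfun_on_line:
  assumes "P \<in> polyfun"
  shows "\<exists>p. \<forall>z. P (\<lambda>i. a i + z * (b i - a i)) = poly p z"
  using assms
proof (induction rule: polyfun.induct)
  case (pf_const c)
  show ?case by (intro exI[of _ "[:c:]"]) simp
next
  case (pf_var i)
  show ?case by (intro exI[of _ "[:a i, b i - a i:]"]) simp
next
  case (pf_add P Q)
  then obtain p q where "\<forall>z. P (\<lambda>i. a i + z * (b i - a i)) = poly p z"
    and "\<forall>z. Q (\<lambda>i. a i + z * (b i - a i)) = poly q z" by blast
  then show ?case by (intro exI[of _ "p + q"]) simp
next
  case (pf_mult P Q)
  then obtain p q where "\<forall>z. P (\<lambda>i. a i + z * (b i - a i)) = poly p z"
    and "\<forall>z. Q (\<lambda>i. a i + z * (b i - a i)) = poly q z" by blast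
  then show ?case by (intro exI[of _ "p * q"]) simp
qed

text \<open>On the line through a and b both become nonzero univariate polynomials.\<close>
lemma polyfun_mult_nonzero:
  assumes "P \<in> polyfun" "Q \<in> polyfun" "P a \<noteq> 0" "Q b \<noteq> 0"
  shows "\<exists>c. P c * Q c \<noteq> 0"
proof -
  obtain p where p: "\<forall>z. P (\<lambda>i. a i + z * (b i - a i)) = poly p z"
    using polyfun_on_line assms(1) by blast
  obtain q where q: "\<forall>z. Q (\<lambda>i. a i + z * (b i - a i)) = poly q z"
    using polyfun_on_line assms(2) by blast
  have "poly p 0 \<noteq> 0" "poly q 1 \<noteq> 0"
    using p[rule_format, of 0] q[rule_format, of 1] assms(3,4) by simp_all
  then have "p * q \<noteq> 0" by auto
  then obtain z where "poly (p * q) z \<noteq> 0" using poly_all_0_iff_0 by blast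
  then show ?thesis using p q by (intro exI[of _ "\<lambda>i. a i + z * (b i - a i)"]) simp
qed

definition polyfun_form :: "((nat \<Rightarrow> complex) \<Rightarrow> complex \<Rightarrow> complex \<Rightarrow> complex) \<Rightarrow> nat \<Rightarrow> bool" where
  "polyfun_form \<Phi> n \<longleftrightarrow>
     (\<exists>\<alpha>. (\<forall>i. \<alpha> i \<in> polyfun) \<and> (\<forall>a u v. \<Phi> a u v = bform (\<lambda>i. \<alpha> i a) n u v))"

lemma polyfun_formE:
  assumes "polyfun_form \<Phi> n"
  obtains \<alpha> where "\<And>i. \<alpha> i \<in> polyfun" "\<And>a u v. \<Phi> a u v = bform (\<lambda>i. \<alpha> i a) n u v"
  using assms unfolding polyfun_form_def by blast

lemma polyfun_form_cong: "polyfun_form \<Phi> n \<Longrightarrow> (\<And>a u v. \<Psi> a u v = \<Phi> a u v) \<Longrightarrow> polyfun_form \<Psi> n"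
  unfolding polyfun_form_def by metis

lemma polyfun_form_monomial:
  assumes "P \<in> polyfun" "i \<le> n"
  shows "polyfun_form (\<lambda>a u v. P a * u ^ i * v ^ (n - i)) n"
  unfolding polyfun_form_def bform_def
proof (intro exI[of _ "\<lambda>k a. if k = i then P a else 0"] conjI allI)
  fix k
  show "(\<lambda>a. if k = i then P a else 0) \<in> polyfun"
    using assms(1) by (cases "k = i") (auto intro: polyfun.pf_const)
next
  fix a u v
  have "(\<Sum>k\<le>n. (if k = i then P a else 0) * u ^ k * v ^ (n - k)) =
        (\<Sum>k\<le>n. if k = i then P a * u ^ k * v ^ (n - k) else 0)"
    by (rule sum.cong) auto
  then show "P a * u ^ i * v ^ (n - i) = (\<Sum>k\<le>n. (if k = i then P a else 0) * u ^ k * v ^ (n - k))"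
    using assms(2) by simp
qed

lemma polyfun_form_add:
  assumes "polyfun_form \<Phi> n" "polyfun_form \<Psi> n"
  shows "polyfun_form (\<lambda>a u v. \<Phi> a u v + \<Psi> a u v) n"
proof -
  obtain \<alpha> where \<alpha>: "\<And>i. \<alpha> i \<in> polyfun" "\<And>a u v. \<Phi> a u v = bform (\<lambda>i. \<alpha> i a) n u v"
    using assms(1) by (rule polyfun_formE) blast
  obtain \<beta> where \<beta>: "\<And>i. \<beta> i \<in> polyfun" "\<And>a u v. \<Psi> a u v = bform (\<lambda>i. \<beta> i a) n u v"
    using assms(2) by (rule polyfun_formE) blast
  show ?thesis unfolding polyfun_form_def
    by (intro exI[of _ "\<lambda>k a. \<alpha> k a + \<beta> k a"] conjI allI)
       (auto intro: polyfun.pf_add \<alpha> \<beta> simp: \<alpha> \<beta> bform_def sum.distrib[symmetric] algebra_simps)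
qed

lemma polyfun_form_sum:
  "finite S \<Longrightarrow> (\<And>x. x \<in> S \<Longrightarrow> polyfun_form (\<Phi> x) n) \<Longrightarrow> polyfun_form (\<lambda>a u v. \<Sum>x\<in>S. \<Phi> x a u v) n"
proof (induction S rule: finite_induct)
  case empty
  show ?case using polyfun_form_monomial[of "\<lambda>a. 0" 0 n] by (simp add: polyfun.pf_const)
next
  case (insert x F)
  then show ?case using polyfun_form_add[of "\<Phi> x" n "\<lambda>a u v. \<Sum>x\<in>F. \<Phi> x a u v"] by simp
qed

lemma polyfun_form_mult:
  assumes "polyfun_form \<Phi> m" "polyfun_form \<Psi> n"
  shows "polyfun_form (\<lambda>a u v. \<Phi> a u v * \<Psi> a u v) (m + n)"
proof -
  obtain \<alpha> where \<alpha>: "\<And>i. \<alpha> i \<in> polyfun" "\<And>a u v. \<Phi> a u v = bform (\<lambda>i. \<alpha> i a) m u v"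
    using assms(1) by (rule polyfun_formE) blast
  obtain \<beta> where \<beta>: "\<And>i. \<beta> i \<in> polyfun" "\<And>a u v. \<Psi> a u v = bform (\<lambda>i. \<beta> i a) n u v"
    using assms(2) by (rule polyfun_formE) blast
  have "polyfun_form (\<lambda>a u v. \<Sum>i\<le>m. \<Sum>j\<le>n. (\<alpha> i a * \<beta> j a) * u ^ (i + j) * v ^ (m + n - (i + j))) (m + n)"
    by (intro polyfun_form_sum finite_atMost polyfun_form_monomial polyfun.pf_mult \<alpha>(1) \<beta>(1)) simp
  then show ?thesis
  proof (rule polyfun_form_cong)
    fix a u v
    have "\<Phi> a u v * \<Psi> a u v = (\<Sum>i\<le>m. \<Sum>j\<le>n. (\<alpha> i a * u ^ i * v ^ (m - i)) * (\<beta> j a * u ^ j * v ^ (n - j)))"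
      by (simp add: \<alpha>(2) \<beta>(2) bform_def sum_product)
    also have "\<dots> = (\<Sum>i\<le>m. \<Sum>j\<le>n. (\<alpha> i a * \<beta> j a) * u ^ (i + j) * v ^ (m + n - (i + j)))"
    proof (intro sum.cong refl)
      fix i j assume "i \<in> {..m}" "j \<in> {..n}"
      then have "m + n - (i + j) = (m - i) + (n - j)" by simp
      then show "(\<alpha> i a * u ^ i * v ^ (m - i)) * (\<beta> j a * u ^ j * v ^ (n - j)) =
                 (\<alpha> i a * \<beta> j a) * u ^ (i + j) * v ^ (m + n - (i + j))"
        by (simp add: power_add algebra_simps)
    qed
    finally show "\<Phi> a u v * \<Psi> a u v = \<dots>" .
  qed
qed

lemma polyfun_form_scale: "polyfun_form \<Phi> n \<Longrightarrow> polyfun_form (\<lambda>a u v. k * \<Phi> a u v) n"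
  using polyfun_form_mult[OF polyfun_form_monomial[of "\<lambda>a. k" 0 0]] by (simp add: polyfun.pf_const)

lemma polyfun_form_diff:
  "polyfun_form \<Phi> n \<Longrightarrow> polyfun_form \<Psi> n \<Longrightarrow> polyfun_form (\<lambda>a u v. \<Phi> a u v - \<Psi> a u v) n"
  using polyfun_form_add[of \<Phi> n "\<lambda>a u v. (-1) * \<Psi> a u v"] polyfun_form_scale[of \<Psi> n "-1"] by simp

lemma polyfun_form_squares:
  assumes "polyfun_form \<Phi> n"
  shows "polyfun_form (\<lambda>a s t. \<Phi> a (s\<^sup>2) (t\<^sup>2)) (2 * n)"
proof -
  obtain \<alpha> where \<alpha>: "\<And>i. \<alpha> i \<in> polyfun" "\<And>a u v. \<Phi> a u v = bform (\<lambda>i. \<alpha> i a) n u v"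
    using assms by (rule polyfun_formE) blast
  have "polyfun_form (\<lambda>a s t. \<Sum>i\<le>n. \<alpha> i a * s ^ (2 * i) * t ^ (2 * n - 2 * i)) (2 * n)"
    by (intro polyfun_form_sum finite_atMost polyfun_form_monomial \<alpha>(1)) simp
  then show ?thesis
    by (rule polyfun_form_cong)
       (simp add: \<alpha>(2) bform_def power_mult[symmetric] diff_mult_distrib2)
qed

lemma polyfun_form_linear_coeffs: "polyfun_form (\<lambda>a. bform (\<lambda>i. k i * a (j + i)) n) n"
  unfolding polyfun_form_def
  by (intro exI[of _ "\<lambda>i a. k i * a (j + i)"] conjI allI)
     (auto intro: polyfun.pf_mult polyfun.pf_const polyfun.pf_var)

lemma bform_coeffs_unique:
  assumes "\<And>u v. bform \<alpha> n u v = bform \<beta> n u v" "i \<le> n"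
  shows "\<alpha> i = \<beta> i"
proof -
  have "(\<Sum>i\<le>n. \<alpha> i * u ^ i) = (\<Sum>i\<le>n. \<beta> i * u ^ i)" for u
    using assms(1)[of u 1] by (simp add: bform_def)
  then show ?thesis using polyfun_eq_coeffs[of \<alpha> n \<beta>] assms(2) by blast
qed

lemma bform_eq_monomial_coeffs:
  assumes "\<And>u v. bform \<alpha> n u v = c * u ^ k * v ^ (n - k)" "k \<le> n" "i \<le> n"
  shows "\<alpha> i = (if i = k then c else 0)"
proof (rule bform_coeffs_unique[OF _ assms(3)])
  fix u v
  have "bform (\<lambda>i. if i = k then c else 0) n u v = (\<Sum>i\<le>n. if i = k then c * u ^ i * v ^ (n - i) else 0)"
    unfolding bform_def by (rule sum.cong) auto
  then show "bform \<alpha> n u v = bform (\<lambda>i. if i = k then c else 0) n u v"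
    using assms(1,2) by simp
qed

section \<open>The Sylvester resultant\<close>

definition shifted_coeff :: "(nat \<Rightarrow> complex) \<Rightarrow> nat \<Rightarrow> nat \<Rightarrow> nat \<Rightarrow> complex" where
  "shifted_coeff \<alpha> m q c = (if q \<le> c \<and> c \<le> q + m then \<alpha> (c - q) else 0)"

text \<open>Rows r < n carry the shifted coefficients \<alpha> of the form of degree m, rows n .. m+n-1 those
  of the form \<beta> of degree n; column c stands for the monomial u^c v^(m+n-1-c).\<close>
definition sylvester_entry :: "(nat \<Rightarrow> complex) \<Rightarrow> nat \<Rightarrow> (nat \<Rightarrow> complex) \<Rightarrow> nat \<Rightarrow> nat \<Rightarrow> nat \<Rightarrow> complex" where
  "sylvester_entry \<alpha> m \<beta> n r c =
     (if r < n then shifted_coeff \<alpha> m r c else shifted_coeff \<beta> n (r - n) c)"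

lemma sum_shifted_coeff:
  assumes "q + m < N"
  shows "(\<Sum>c<N. shifted_coeff \<alpha> m q c * (u ^ c * v ^ (N - 1 - c))) =
         u ^ q * v ^ (N - 1 - m - q) * bform \<alpha> m u v"
proof -
  have "(\<Sum>c<N. shifted_coeff \<alpha> m q c * (u ^ c * v ^ (N - 1 - c))) =
        (\<Sum>c\<in>{..<N} \<inter> {q..q + m}. \<alpha> (c - q) * (u ^ c * v ^ (N - 1 - c)))"
    unfolding shifted_coeff_def by (subst sum.inter_restrict) (auto intro: sum.cong)
  also have "{..<N} \<inter> {q..q + m} = {0 + q..m + q}" using assms by auto
  also have "(\<Sum>c\<in>{0 + q..m + q}. \<alpha> (c - q) * (u ^ c * v ^ (N - 1 - c))) =
             (\<Sum>i\<le>m. \<alpha> i * (u ^ (i + q) * v ^ (N - 1 - (i + q))))"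
    by (subst sum.shift_bounds_cl_nat_ivl) (simp add: atLeast0AtMost)
  also have "\<dots> = (\<Sum>i\<le>m. u ^ q * v ^ (N - 1 - m - q) * (\<alpha> i * u ^ i * v ^ (m - i)))"
  proof (rule sum.cong)
    fix i assume "i \<in> {..m}"
    then have "N - 1 - (i + q) = (N - 1 - m - q) + (m - i)" using assms by auto
    then show "\<alpha> i * (u ^ (i + q) * v ^ (N - 1 - (i + q))) =
               u ^ q * v ^ (N - 1 - m - q) * (\<alpha> i * u ^ i * v ^ (m - i))"
      by (simp add: power_add algebra_simps)
  qed simp
  finally show ?thesis by (simp add: bform_def sum_distrib_left)
qed

lemma sum_sylvester_row_common_zero:
  assumes "r < m + n" "bform \<alpha> m u v = 0" "bform \<beta> n u v = 0"
  shows "(\<Sum>c<m + n. sylvester_entry \<alpha> m \<beta> n r c * (u ^ c * v ^ (m + n - 1 - c))) = 0"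
proof (cases "r < n")
  case True
  then show ?thesis
    using sum_shifted_coeff[of r m "m + n" \<alpha> u v] assms(2) by (simp add: sylvester_entry_def)
next
  case False
  then show ?thesis
    using sum_shifted_coeff[of "r - n" n "m + n" \<beta> u v] assms(1,3) by (simp add: sylvester_entry_def)
qed

text \<open>A common zero (u, v) \<noteq> 0 of both forms gives the nonzero kernel vector
  (u^c v^(m+n-1-c))_c of the Sylvester matrix.\<close>
lemma det_sylvester_common_zero:
  fixes idx :: "'k::finite \<Rightarrow> nat"
  assumes idx: "bij_betw idx UNIV {..<m + n}"
    and "bform \<alpha> m u v = 0" "bform \<beta> n u v = 0" "u \<noteq> 0 \<or> v \<noteq> 0"
  shows "det (\<chi> i j. sylvester_entry \<alpha> m \<beta> n (idx i) (idx j) :: complex^'k^'k) = 0"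
proof -
  define M where "M = (\<chi> i j. sylvester_entry \<alpha> m \<beta> n (idx i) (idx j) :: complex^'k^'k)"
  define x where "x = (\<chi> j. u ^ idx j * v ^ (m + n - 1 - idx j) :: complex^'k)"
  have "(M *v x) $ i = 0" for i
  proof -
    have "(M *v x) $ i = (\<Sum>c<m + n. sylvester_entry \<alpha> m \<beta> n (idx i) c * (u ^ c * v ^ (m + n - 1 - c)))"
      using sum.reindex_bij_betw[OF idx] by (simp add: M_def x_def matrix_vector_mult_def)
    also have "\<dots> = 0"
      using idx assms(2,3) by (intro sum_sylvester_row_common_zero) (auto simp: bij_betw_def)
    finally show ?thesis .
  qed
  then have "M *v x = 0" by (simp add: vec_eq_iff)
  moreover have "x \<noteq> 0"
  proof -
    have "idx undefined < m + n" using idx by (auto simp: bij_betw_def)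
    then have "(if u = 0 then 0 else m + n - 1) \<in> range idx" using idx by (auto simp: bij_betw_def)
    then obtain j where j: "idx j = (if u = 0 then 0 else m + n - 1)" by (metis rangeE)
    then have "x $ j \<noteq> 0" using assms(4) by (auto simp: x_def)
    then show ?thesis by auto
  qed
  ultimately have "\<not> inj ((*v) M)"
    by (metis inj_def matrix_vector_mult_0_right)
  then show ?thesis
    using det_nz_iff_inj_gen[of "(*v) M"] matrix_vector_mul_linear_gen by (auto simp: M_def)
qed

lemma polyfun_det_sylvester:
  fixes idx :: "'k::finite \<Rightarrow> nat"
  assumes "\<And>i. \<alpha> i \<in> polyfun" "\<And>i. \<beta> i \<in> polyfun"
  shows "(\<lambda>a. det (\<chi> i j. sylvester_entry (\<lambda>k. \<alpha> k a) m (\<lambda>k. \<beta> k a) n (idx i) (idx j) :: complex^'k^'k))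
         \<in> polyfun"
proof -
  have "(\<lambda>a. sylvester_entry (\<lambda>k. \<alpha> k a) m (\<lambda>k. \<beta> k a) n r c) \<in> polyfun" for r c
    unfolding sylvester_entry_def shifted_coeff_def
    by (intro polyfun_if assms polyfun.pf_const)
  then show ?thesis
    unfolding det_def
    by (intro polyfun_sum polyfun_prod polyfun.pf_mult polyfun.pf_const finite_UNIV finite_Collect_subsets) simp_all
qed

text \<open>For the forms c v^m and d u^n the Sylvester matrix is diagonal.\<close>
lemma det_sylvester_monomials:
  fixes idx :: "'k::finite \<Rightarrow> nat"
  assumes idx: "bij_betw idx UNIV {..<m + n}"
    and \<alpha>: "\<And>k. k \<le> m \<Longrightarrow> \<alpha> k = (if k = 0 then c else 0)"
    and \<beta>: "\<And>k. k \<le> n \<Longrightarrow> \<beta> k = (if k = n then d else 0)"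
    and "c \<noteq> 0" "d \<noteq> 0"
  shows "det (\<chi> i j. sylvester_entry \<alpha> m \<beta> n (idx i) (idx j) :: complex^'k^'k) \<noteq> 0"
proof -
  have entry: "sylvester_entry \<alpha> m \<beta> n r s = (if r = s then (if r < n then c else d) else 0)" for r s
    using \<alpha> \<beta> by (auto simp: sylvester_entry_def shifted_coeff_def)
  have "inj idx" using idx by (simp add: bij_betw_def)
  then have "det (\<chi> i j. sylvester_entry \<alpha> m \<beta> n (idx i) (idx j) :: complex^'k^'k) =
             (\<Prod>i\<in>UNIV. sylvester_entry \<alpha> m \<beta> n (idx i) (idx i))"
    by (subst det_diagonal) (auto simp: entry inj_def)
  then show ?thesis using assms(4,5) by (simp add: entry)
qed

text \<open>The type 'k only serves to index the (m+n) x (m+n) Sylvester matrix.\<close>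
lemma polyfun_resultant:
  assumes card: "CARD('k::finite) = m + n"
    and "polyfun_form \<Phi> m" "polyfun_form \<Psi> n"
    and \<Phi>0: "\<And>u v. \<Phi> a0 u v = c * v ^ m" and \<Psi>0: "\<And>u v. \<Psi> a0 u v = d * u ^ n"
    and "c \<noteq> 0" "d \<noteq> 0"
  shows "\<exists>R \<in> polyfun. R a0 \<noteq> 0 \<and>
           (\<forall>a u v. R a \<noteq> 0 \<longrightarrow> \<Phi> a u v = 0 \<longrightarrow> \<Psi> a u v = 0 \<longrightarrow> u = 0 \<and> v = 0)"
proof -
  obtain \<alpha> where \<alpha>: "\<And>i. \<alpha> i \<in> polyfun" "\<And>a u v. \<Phi> a u v = bform (\<lambda>i. \<alpha> i a) m u v"
    using assms(2) by (rule polyfun_formE) blast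
  obtain \<beta> where \<beta>: "\<And>i. \<beta> i \<in> polyfun" "\<And>a u v. \<Psi> a u v = bform (\<lambda>i. \<beta> i a) n u v"
    using assms(3) by (rule polyfun_formE) blast
  obtain idx :: "'k \<Rightarrow> nat" where idx: "bij_betw idx UNIV {..<m + n}"
    using ex_bij_betw_finite_nat[of "UNIV :: 'k set"] card by (auto simp: atLeast0LessThan)
  define R where "R a = det (\<chi> i j. sylvester_entry (\<lambda>k. \<alpha> k a) m (\<lambda>k. \<beta> k a) n (idx i) (idx j) :: complex^'k^'k)"
    for a
  have "R \<in> polyfun"
    unfolding R_def by (rule polyfun_det_sylvester[OF \<alpha>(1) \<beta>(1)])
  moreover have "R a0 \<noteq> 0"
    unfolding R_def
  proof (rule det_sylvester_monomials[OF idx _ _ assms(6,7)])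
    show "\<alpha> k a0 = (if k = 0 then c else 0)" if "k \<le> m" for k
      by (rule bform_eq_monomial_coeffs[of _ m c 0]) (use \<Phi>0 \<alpha>(2) that in auto)
    show "\<beta> k a0 = (if k = n then d else 0)" if "k \<le> n" for k
      by (rule bform_eq_monomial_coeffs[of _ n d n]) (use \<Psi>0 \<beta>(2) that in auto)
  qed
  moreover have "u = 0 \<and> v = 0" if "R a \<noteq> 0" "\<Phi> a u v = 0" "\<Psi> a u v = 0" for a u v
    using that det_sylvester_common_zero[OF idx, of "\<lambda>k. \<alpha> k a" u v "\<lambda>k. \<beta> k a"]
    by (auto simp: R_def \<alpha>(2) \<beta>(2))
  ultimately show ?thesis by blast
qed

section \<open>The quartic and its partial derivatives\<close>

lemma c2_expand: "c2 a u v = a 0 * v\<^sup>2 + a 1 * u * v + a 2 * u\<^sup>2"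
  by (simp add: c2_def bform_def eval_nat_numeral)

lemma e3_expand: "e3 a u v = a 3 * v ^ 3 + a 4 * u * v\<^sup>2 + a 5 * u\<^sup>2 * v + a 6 * u ^ 3"
  by (simp add: e3_def bform_def eval_nat_numeral)

lemma d4_expand:
  "d4 a u v = a 7 * v ^ 4 + a 8 * u * v ^ 3 + a 9 * u\<^sup>2 * v\<^sup>2 + a 10 * u ^ 3 * v + a 11 * u ^ 4"
  by (simp add: d4_def bform_def eval_nat_numeral)

definition "c2_u a u v = a 1 * v + 2 * a 2 * u"
definition "c2_v a u v = 2 * a 0 * v + a 1 * u"
definition "e3_u a u v = a 4 * v\<^sup>2 + 2 * a 5 * u * v + 3 * a 6 * u\<^sup>2"
definition "e3_v a u v = 3 * a 3 * v\<^sup>2 + 2 * a 4 * u * v + a 5 * u\<^sup>2"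
definition "d4_u a u v = a 8 * v ^ 3 + 2 * a 9 * u * v\<^sup>2 + 3 * a 10 * u\<^sup>2 * v + 4 * a 11 * u ^ 3"
definition "d4_v a u v = 4 * a 7 * v ^ 3 + 3 * a 8 * u * v\<^sup>2 + 2 * a 9 * u\<^sup>2 * v + a 10 * u ^ 3"

definition "quartic a u v w y = (w\<^sup>2 - u * v) * y\<^sup>2 - (c2 a u v * w\<^sup>2 + e3 a u v * w + d4 a u v)"
definition "quartic_u a u v w y = - v * y\<^sup>2 - (c2_u a u v * w\<^sup>2 + e3_u a u v * w + d4_u a u v)"
definition "quartic_v a u v w y = - u * y\<^sup>2 - (c2_v a u v * w\<^sup>2 + e3_v a u v * w + d4_v a u v)"
definition "quartic_w a u v w y = 2 * w * y\<^sup>2 - (2 * c2 a u v * w + e3 a u v)"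
definition "quartic_y (u::complex) v w y = 2 * (w\<^sup>2 - u * v) * y"

definition "quartic_dir a z1 z2 z3 z4 u v w y =
  z1 * quartic_u a u v w y + z2 * quartic_v a u v w y + z3 * quartic_w a u v w y + z4 * quartic_y u v w y"

lemmas quartic_expand = quartic_u_def quartic_v_def quartic_w_def quartic_y_def
  c2_expand e3_expand d4_expand c2_u_def c2_v_def e3_u_def e3_v_def d4_u_def d4_v_def

lemma quartic_has_derivative_on_line:
  "((\<lambda>t. quartic a (u + t * z1) (v + t * z2) (w + t * z3) (y + t * z4)) has_field_derivative
     quartic_dir a z1 z2 z3 z4 u v w y) (at 0)"
  unfolding quartic_def quartic_dir_def quartic_expand
  by (rule derivative_eq_intros refl | simp)+ (simp add: algebra_simps power2_eq_square power3_eq_cube)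

lemma quarticK_eq_quartic: "quarticK a x = quartic a (x$1) (x$2) (x$3) (x$4)"
  by (simp add: quarticK_def quartic_def coord_u_def coord_v_def coord_w_def coord_y_def)

lemma pderiv4_quarticK:
  "pderiv4 (quarticK a) i =
     (\<lambda>x. quartic_dir a (axis i 1 $ 1) (axis i 1 $ 2) (axis i 1 $ 3) (axis i 1 $ 4) (x$1) (x$2) (x$3) (x$4))"
  unfolding pderiv4_def quarticK_eq_quartic
  by (intro ext DERIV_imp_deriv) (use quartic_has_derivative_on_line in simp)

lemma sing_point_quarticK_iff_coords:
  "sing_point (quarticK a) x \<longleftrightarrow> x \<noteq> 0 \<and> quartic a (x$1) (x$2) (x$3) (x$4) = 0 \<and>
     quartic_u a (x$1) (x$2) (x$3) (x$4) = 0 \<and> quartic_v a (x$1) (x$2) (x$3) (x$4) = 0 \<and>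
     quartic_w a (x$1) (x$2) (x$3) (x$4) = 0 \<and> quartic_y (x$1) (x$2) (x$3) (x$4) = 0"
  unfolding sing_point_def pderiv4_quarticK quarticK_eq_quartic forall_4
  by (simp add: quartic_dir_def axis_def)

lemma p1_nth: "p1$1 = 0" "p1$2 = 0" "p1$3 = 0" "p1$4 = 1"
  by (simp_all add: p1_def)

lemma p2_nth: "p2$1 = 0" "p2$2 = 0" "p2$3 = 1" "p2$4 = 0"
  by (simp_all add: p2_def)

lemma sing_point_quarticK_p1:
  assumes "t \<noteq> 0"
  shows "sing_point (quarticK a) (t *s p1)"
proof -
  have "p1 \<noteq> 0" using p1_nth(4) by (metis zero_index zero_neq_one)
  then show ?thesis using assms by (auto simp: sing_point_quarticK_iff_coords p1_nth quartic_def quartic_expand)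
qed

lemma sing_point_quarticK_p2:
  assumes "t \<noteq> 0"
  shows "sing_point (quarticK a) (t *s p2)"
proof -
  have "p2 \<noteq> 0" using p2_nth(3) by (metis zero_index zero_neq_one)
  then show ?thesis using assms by (auto simp: sing_point_quarticK_iff_coords p2_nth quartic_def quartic_expand)
qed

lemma quartic_dir_has_derivative_at_p1:
  "((\<lambda>t. quartic_dir a q1 q2 q3 q4 ((p1 + t *s z)$1) ((p1 + t *s z)$2) ((p1 + t *s z)$3) ((p1 + t *s z)$4))
     has_field_derivative - (z$1 * q2) - z$2 * q1 + 2 * z$3 * q3) (at 0)"
  unfolding quartic_dir_def quartic_expand vector_add_component vector_smult_component p1_nth
  apply (rule derivative_eq_intros refl | simp)+
  apply (simp add: algebra_simps power2_eq_square power3_eq_cube)?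
  done

lemma quartic_dir_has_derivative_at_p2:
  "((\<lambda>t. quartic_dir a q1 q2 q3 q4 ((p2 + t *s z)$1) ((p2 + t *s z)$2) ((p2 + t *s z)$3) ((p2 + t *s z)$4))
     has_field_derivative - 2 * a 2 * z$1 * q1 - a 1 * (z$1 * q2 + z$2 * q1) - 2 * a 0 * z$2 * q2 + 2 * z$4 * q4) (at 0)"
  unfolding quartic_dir_def quartic_expand vector_add_component vector_smult_component p2_nth
  apply (rule derivative_eq_intros refl | simp)+
  apply (simp add: algebra_simps power2_eq_square power3_eq_cube)?
  done

lemma hessian4_quarticK_p1:
  "hessian4 (quarticK a) p1 $ i $ j =
     - (axis i 1 $ 1 * axis j 1 $ 2) - axis i 1 $ 2 * axis j 1 $ 1 + 2 * axis i 1 $ 3 * axis j 1 $ 3"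
  unfolding hessian4_def pderiv4_quarticK pderiv4_def vec_lambda_beta
  by (rule DERIV_imp_deriv[OF quartic_dir_has_derivative_at_p1])

lemma hessian4_quarticK_p2:
  "hessian4 (quarticK a) p2 $ i $ j =
     - 2 * a 2 * axis i 1 $ 1 * axis j 1 $ 1 - a 1 * (axis i 1 $ 1 * axis j 1 $ 2 + axis i 1 $ 2 * axis j 1 $ 1)
     - 2 * a 0 * axis i 1 $ 2 * axis j 1 $ 2 + 2 * axis i 1 $ 4 * axis j 1 $ 4"
  unfolding hessian4_def pderiv4_quarticK pderiv4_def vec_lambda_beta
  by (rule DERIV_imp_deriv[OF quartic_dir_has_derivative_at_p2])

lemma dim_three_independent:
  fixes x y z :: "'a::field ^ 'n"
  assumes "z \<noteq> 0" "\<And>k. y \<noteq> k *s z" "\<And>k l. x \<noteq> k *s y + l *s z"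
  shows "vec.dim {x, y, z, 0} = 3"
proof -
  have span_z: "vec.span {z, 0} = range (\<lambda>k. k *s z)"
    using vec.span_insert_0[of "{z}"] by (simp add: insert_commute vec.span_singleton)
  have "vec.dim {z, 0} = 1"
    using assms(1) by (simp add: vec.dim_insert vec.span_insert_0)
  then have "vec.dim {y, z, 0} = 2"
    using assms(2) by (subst vec.dim_insert) (auto simp: span_z)
  moreover have "x \<notin> vec.span {y, z, 0}"
  proof
    assume "x \<in> vec.span {y, z, 0}"
    then obtain k where "x - k *s y \<in> vec.span {z, 0}" by (auto simp: vec.span_insert)
    then obtain l where "x - k *s y = l *s z" by (auto simp: span_z)
    then have "x = k *s y + l *s z" by (simp add: algebra_simps)
    with assms(3) show False by blast
  qed
  ultimately show ?thesis by (subst vec.dim_insert) simp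
qed

lemma rows_4: "rows (A :: 'a::zero ^ 4 ^ 4) = {row 1 A, row 2 A, row 3 A, row 4 A}"
  unfolding rows_def by (auto, metis exhaust_4)

lemma A1_point_quarticK_p1: "A1_point (quarticK a) p1"
proof -
  let ?H = "hessian4 (quarticK a) p1"
  have "rows ?H = {row 1 ?H, row 2 ?H, row 3 ?H, 0}"
    unfolding rows_4 by (simp add: row_def hessian4_quarticK_p1 axis_def zero_vec_def[symmetric])
  moreover have "vec.dim {row 1 ?H, row 2 ?H, row 3 ?H, 0} = 3"
    by (rule dim_three_independent) (auto simp: row_def hessian4_quarticK_p1 axis_def vec_eq_iff forall_4)
  ultimately have "rank ?H = 3" by (simp add: row_rank_def_gen)
  then show ?thesis
    using sing_point_quarticK_p1[of 1 a] by (simp add: A1_point_def)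
qed

definition "c2_discriminant a = (a 1)\<^sup>2 - 4 * a 0 * a 2"

lemma polyfun_c2_discriminant: "c2_discriminant \<in> polyfun"
  unfolding c2_discriminant_def by (intro polyfun_diff polyfun_power polyfun.intros)

lemma A1_point_quarticK_p2:
  assumes "c2_discriminant a \<noteq> 0"
  shows "A1_point (quarticK a) p2"
proof -
  have discr: "(a 1)\<^sup>2 - 4 * a 0 * a 2 \<noteq> 0" using assms by (simp add: c2_discriminant_def)
  let ?H = "hessian4 (quarticK a) p2"
  have "rows ?H = {row 1 ?H, row 2 ?H, row 4 ?H, 0}"
    unfolding rows_4 by (auto simp: row_def hessian4_quarticK_p2 axis_def vec_eq_iff)
  moreover have "vec.dim {row 1 ?H, row 2 ?H, row 4 ?H, 0} = 3"
  proof (rule dim_three_independent)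
    show "row 4 ?H \<noteq> 0" by (auto simp: row_def hessian4_quarticK_p2 axis_def vec_eq_iff)
  next
    fix k
    show "row 2 ?H \<noteq> k *s row 4 ?H"
    proof
      assume "row 2 ?H = k *s row 4 ?H"
      then have "a 1 = 0" "a 0 = 0"
        unfolding vec_eq_iff forall_4 by (auto simp: row_def hessian4_quarticK_p2 axis_def)
      with discr show False by simp
    qed
  next
    fix k l
    show "row 1 ?H \<noteq> k *s row 2 ?H + l *s row 4 ?H"
    proof
      assume "row 1 ?H = k *s row 2 ?H + l *s row 4 ?H"
      then have "2 * a 2 = k * a 1" "a 1 = 2 * k * a 0"
        unfolding vec_eq_iff forall_4 by (auto simp: row_def hessian4_quarticK_p2 axis_def)
      then have "(a 1)\<^sup>2 - 4 * a 0 * a 2 = 0" by (simp add: algebra_simps power2_eq_square)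
      with discr show False by simp
    qed
  qed
  ultimately have "rank ?H = 3" by (simp add: row_rank_def_gen)
  then show ?thesis
    using sing_point_quarticK_p2[of 1 a] by (simp add: A1_point_def)
qed

section \<open>Singular points\<close>

text \<open>The partial derivatives of the discriminant e3^2 - 4 c2 d4 of c2 w^2 + e3 w + d4 as a
  quadratic in w.\<close>
definition "discr_u a u v =
  2 * e3 a u v * e3_u a u v - 4 * c2_u a u v * d4 a u v - 4 * c2 a u v * d4_u a u v"
definition "discr_v a u v =
  2 * e3 a u v * e3_v a u v - 4 * c2_v a u v * d4 a u v - 4 * c2 a u v * d4_v a u v"

text \<open>At (u, v, w) = (s^2, t^2, st) these are -(2 s quartic_u + t quartic_w) and
  -(2 t quartic_v + s quartic_w), in which the terms with y cancel.\<close>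
definition "conic_s a s t =
  2 * s * (c2_u a (s\<^sup>2) (t\<^sup>2) * (s * t)\<^sup>2 + e3_u a (s\<^sup>2) (t\<^sup>2) * (s * t) + d4_u a (s\<^sup>2) (t\<^sup>2))
  + t * (2 * c2 a (s\<^sup>2) (t\<^sup>2) * (s * t) + e3 a (s\<^sup>2) (t\<^sup>2))"
definition "conic_t a s t =
  2 * t * (c2_v a (s\<^sup>2) (t\<^sup>2) * (s * t)\<^sup>2 + e3_v a (s\<^sup>2) (t\<^sup>2) * (s * t) + d4_v a (s\<^sup>2) (t\<^sup>2))
  + s * (2 * c2 a (s\<^sup>2) (t\<^sup>2) * (s * t) + e3 a (s\<^sup>2) (t\<^sup>2))"

lemma discr_partials_vanish:
  assumes "quartic a u v w 0 = 0" "quartic_u a u v w 0 = 0" "quartic_v a u v w 0 = 0" "quartic_w a u v w 0 = 0"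
  shows "discr_u a u v = 0" "discr_v a u v = 0"
proof -
  have G: "c2 a u v * w\<^sup>2 + e3 a u v * w + d4 a u v = 0"
    and Gu: "c2_u a u v * w\<^sup>2 + e3_u a u v * w + d4_u a u v = 0"
    and Gv: "c2_v a u v * w\<^sup>2 + e3_v a u v * w + d4_v a u v = 0"
    and Gw: "2 * c2 a u v * w + e3 a u v = 0"
    using assms unfolding quartic_def quartic_u_def quartic_v_def quartic_w_def
    by (simp_all only: power_zero_numeral mult_zero_right diff_0 neg_equal_0_iff_equal)
  have "discr_u a u v = 2 * (2 * c2 a u v * w + e3 a u v) * (2 * c2_u a u v * w + e3_u a u v)
      - 4 * c2_u a u v * (c2 a u v * w\<^sup>2 + e3 a u v * w + d4 a u v)
      - 4 * c2 a u v * (c2_u a u v * w\<^sup>2 + e3_u a u v * w + d4_u a u v)"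
    by (simp add: discr_u_def algebra_simps power2_eq_square)
  then show "discr_u a u v = 0" by (simp add: G Gu Gw)
  have "discr_v a u v = 2 * (2 * c2 a u v * w + e3 a u v) * (2 * c2_v a u v * w + e3_v a u v)
      - 4 * c2_v a u v * (c2 a u v * w\<^sup>2 + e3 a u v * w + d4 a u v)
      - 4 * c2 a u v * (c2_v a u v * w\<^sup>2 + e3_v a u v * w + d4_v a u v)"
    by (simp add: discr_v_def algebra_simps power2_eq_square)
  then show "discr_v a u v = 0" by (simp add: G Gv Gw)
qed

lemma conic_forms_vanish:
  assumes "quartic_u a (s\<^sup>2) (t\<^sup>2) (s * t) y = 0" "quartic_v a (s\<^sup>2) (t\<^sup>2) (s * t) y = 0"
    and "quartic_w a (s\<^sup>2) (t\<^sup>2) (s * t) y = 0"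
  shows "conic_s a s t = 0" "conic_t a s t = 0"
proof -
  have Gu: "c2_u a (s\<^sup>2) (t\<^sup>2) * (s * t)\<^sup>2 + e3_u a (s\<^sup>2) (t\<^sup>2) * (s * t) + d4_u a (s\<^sup>2) (t\<^sup>2) = - (t\<^sup>2 * y\<^sup>2)"
    using assms(1) by (simp add: quartic_u_def algebra_simps)
  have Gv: "c2_v a (s\<^sup>2) (t\<^sup>2) * (s * t)\<^sup>2 + e3_v a (s\<^sup>2) (t\<^sup>2) * (s * t) + d4_v a (s\<^sup>2) (t\<^sup>2) = - (s\<^sup>2 * y\<^sup>2)"
    using assms(2) by (simp add: quartic_v_def algebra_simps)
  have Gw: "2 * c2 a (s\<^sup>2) (t\<^sup>2) * (s * t) + e3 a (s\<^sup>2) (t\<^sup>2) = 2 * (s * t) * y\<^sup>2"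
    using assms(3) by (simp add: quartic_w_def algebra_simps)
  show "conic_s a s t = 0" unfolding conic_s_def Gu Gw by (simp add: algebra_simps power2_eq_square)
  show "conic_t a s t = 0" unfolding conic_t_def Gv Gw by (simp add: algebra_simps power2_eq_square)
qed

lemma conic_parametrisation:
  assumes "w\<^sup>2 = u * (v::complex)"
  obtains s t where "u = s\<^sup>2" "v = t\<^sup>2" "w = s * t"
proof (cases "u = 0")
  case True
  with assms show ?thesis by (intro that[of 0 "csqrt v"]) simp_all
next
  case False
  define s where "s = csqrt u"
  have "s\<^sup>2 = u" "s \<noteq> 0" using False by (simp_all add: s_def)
  with assms False show ?thesis by (intro that[of s "w / s"]) (simp_all add: power_divide)
qed

lemma sing_point_quarticK_uv:
  assumes sing: "sing_point (quarticK a) x"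
    and discr: "\<And>u v. discr_u a u v = 0 \<Longrightarrow> discr_v a u v = 0 \<Longrightarrow> u = 0 \<and> v = 0"
    and conic: "\<And>s t. conic_s a s t = 0 \<Longrightarrow> conic_t a s t = 0 \<Longrightarrow> s = 0 \<and> t = 0"
  shows "x$1 = 0 \<and> x$2 = 0"
proof -
  have eqs: "quartic a (x$1) (x$2) (x$3) (x$4) = 0" "quartic_u a (x$1) (x$2) (x$3) (x$4) = 0"
    "quartic_v a (x$1) (x$2) (x$3) (x$4) = 0" "quartic_w a (x$1) (x$2) (x$3) (x$4) = 0"
    and "quartic_y (x$1) (x$2) (x$3) (x$4) = 0"
    using sing by (simp_all add: sing_point_quarticK_iff_coords)
  then have "x$4 = 0 \<or> (x$3)\<^sup>2 = x$1 * x$2" by (auto simp: quartic_y_def)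
  then show ?thesis
  proof
    assume "x$4 = 0"
    then have "discr_u a (x$1) (x$2) = 0" "discr_v a (x$1) (x$2) = 0"
      using discr_partials_vanish[of a "x$1" "x$2" "x$3"] eqs by simp_all
    then show ?thesis by (rule discr)
  next
    assume "(x$3)\<^sup>2 = x$1 * x$2"
    then obtain s t where st: "x$1 = s\<^sup>2" "x$2 = t\<^sup>2" "x$3 = s * t" by (rule conic_parametrisation)
    have "conic_s a s t = 0" "conic_t a s t = 0"
      using conic_forms_vanish[OF eqs(2-4)[unfolded st]] by simp_all
    then have "s = 0 \<and> t = 0" by (rule conic)
    with st show ?thesis by simp
  qed
qed

lemma sing_point_quarticK_uv_zero:
  assumes "sing_point (quarticK a) x" "x$1 = 0" "x$2 = 0"
  shows "\<exists>t. t \<noteq> 0 \<and> (x = t *s p1 \<or> x = t *s p2)"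
proof -
  have "x \<noteq> 0" "x$3 * (x$4)\<^sup>2 = 0"
    using assms by (simp_all add: sing_point_quarticK_iff_coords quartic_expand)
  then have "x$3 = 0 \<and> x$4 \<noteq> 0 \<or> x$4 = 0 \<and> x$3 \<noteq> 0"
    using assms(2,3) by (auto simp: vec_eq_iff forall_4)
  then have "x = x$4 *s p1 \<and> x$4 \<noteq> 0 \<or> x = x$3 *s p2 \<and> x$3 \<noteq> 0"
    using assms(2,3) by (auto simp: vec_eq_iff forall_4 p1_nth p2_nth)
  then show ?thesis by blast
qed

lemma sing_point_quarticK_iff:
  assumes "\<And>u v. discr_u a u v = 0 \<Longrightarrow> discr_v a u v = 0 \<Longrightarrow> u = 0 \<and> v = 0"
    and "\<And>s t. conic_s a s t = 0 \<Longrightarrow> conic_t a s t = 0 \<Longrightarrow> s = 0 \<and> t = 0"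
  shows "sing_point (quarticK a) x \<longleftrightarrow> (\<exists>t. t \<noteq> 0 \<and> (x = t *s p1 \<or> x = t *s p2))"
proof
  assume "sing_point (quarticK a) x"
  then show "\<exists>t. t \<noteq> 0 \<and> (x = t *s p1 \<or> x = t *s p2)"
    using sing_point_quarticK_uv[OF _ assms] sing_point_quarticK_uv_zero by blast
qed (use sing_point_quarticK_p1 sing_point_quarticK_p2 in blast)

lemma quarticK_two_A1_points:
  assumes "c2_discriminant a \<noteq> 0"
    and "\<And>u v. discr_u a u v = 0 \<Longrightarrow> discr_v a u v = 0 \<Longrightarrow> u = 0 \<and> v = 0"
    and "\<And>s t. conic_s a s t = 0 \<Longrightarrow> conic_t a s t = 0 \<Longrightarrow> s = 0 \<and> t = 0"
  shows "(\<forall>x. sing_point (quarticK a) x \<longleftrightarrow> (\<exists>t. t \<noteq> 0 \<and> (x = t *s p1 \<or> x = t *s p2)))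
    \<and> A1_point (quarticK a) p1 \<and> A1_point (quarticK a) p2"
  using sing_point_quarticK_iff[OF assms(2,3)] A1_point_quarticK_p1 A1_point_quarticK_p2[OF assms(1)]
  by blast

section \<open>Genericity\<close>

lemma polyfun_form_coefficient_forms:
  "polyfun_form c2 2" "polyfun_form e3 3" "polyfun_form d4 4"
  "polyfun_form c2_u 1" "polyfun_form c2_v 1" "polyfun_form e3_u 2" "polyfun_form e3_v 2"
  "polyfun_form d4_u 3" "polyfun_form d4_v 3"
proof -
  have linear: "polyfun_form \<Phi> n" if "\<And>a u v. \<Phi> a u v = bform (\<lambda>i. k i * a (j + i)) n u v" for \<Phi> n k j
    using polyfun_form_cong[OF polyfun_form_linear_coeffs] that by blast
  show "polyfun_form c2 2" by (rule linear[where k = "\<lambda>i. 1" and j = 0]) (simp add: c2_def)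
  show "polyfun_form e3 3" by (rule linear[where k = "\<lambda>i. 1" and j = 3]) (simp add: e3_def)
  show "polyfun_form d4 4" by (rule linear[where k = "\<lambda>i. 1" and j = 7]) (simp add: d4_def)
  show "polyfun_form c2_u 1" by (rule linear[where k = "\<lambda>i. of_nat (i + 1)" and j = 1])
      (simp add: c2_u_def bform_def eval_nat_numeral algebra_simps)
  show "polyfun_form c2_v 1" by (rule linear[where k = "\<lambda>i. of_nat (2 - i)" and j = 0])
      (simp add: c2_v_def bform_def eval_nat_numeral algebra_simps)
  show "polyfun_form e3_u 2" by (rule linear[where k = "\<lambda>i. of_nat (i + 1)" and j = 4])
      (simp add: e3_u_def bform_def eval_nat_numeral algebra_simps)
  show "polyfun_form e3_v 2" by (rule linear[where k = "\<lambda>i. of_nat (3 - i)" and j = 3])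
      (simp add: e3_v_def bform_def eval_nat_numeral algebra_simps)
  show "polyfun_form d4_u 3" by (rule linear[where k = "\<lambda>i. of_nat (i + 1)" and j = 8])
      (simp add: d4_u_def bform_def eval_nat_numeral algebra_simps)
  show "polyfun_form d4_v 3" by (rule linear[where k = "\<lambda>i. of_nat (4 - i)" and j = 7])
      (simp add: d4_v_def bform_def eval_nat_numeral algebra_simps)
qed

lemma polyfun_form_discr_partials: "polyfun_form discr_u 5" "polyfun_form discr_v 5"
proof -
  note forms = polyfun_form_coefficient_forms
  have "polyfun_form (\<lambda>a u v. 2 * (e3 a u v * e3_u a u v) - 4 * (c2_u a u v * d4 a u v)
      - 4 * (c2 a u v * d4_u a u v)) 5"
    using polyfun_form_mult[OF forms(2,6)] polyfun_form_mult[OF forms(4,3)] polyfun_form_mult[OF forms(1,8)]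
    by (intro polyfun_form_diff polyfun_form_scale) simp_all
  then show "polyfun_form discr_u 5" by (rule polyfun_form_cong) (simp add: discr_u_def)
  have "polyfun_form (\<lambda>a u v. 2 * (e3 a u v * e3_v a u v) - 4 * (c2_v a u v * d4 a u v)
      - 4 * (c2 a u v * d4_v a u v)) 5"
    using polyfun_form_mult[OF forms(2,7)] polyfun_form_mult[OF forms(5,3)] polyfun_form_mult[OF forms(1,9)]
    by (intro polyfun_form_diff polyfun_form_scale) simp_all
  then show "polyfun_form discr_v 5" by (rule polyfun_form_cong) (simp add: discr_v_def)
qed

lemma polyfun_form_on_conic:
  assumes "polyfun_form X n" "polyfun_form Y m" "polyfun_form Z k" "m = n + 1" "k = n + 2"
  shows "polyfun_form (\<lambda>a s t. X a (s\<^sup>2) (t\<^sup>2) * (s * t)\<^sup>2 + Y a (s\<^sup>2) (t\<^sup>2) * (s * t) + Z a (s\<^sup>2) (t\<^sup>2))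
           (2 * n + 4)"
proof -
  have st: "polyfun_form (\<lambda>a s t. s * t) 2" and st2: "polyfun_form (\<lambda>a s t. (s * t)\<^sup>2) 4"
    using polyfun_form_monomial[of "\<lambda>a. 1" 1 2] polyfun_form_monomial[of "\<lambda>a. 1" 2 4]
    by (simp_all add: polyfun.pf_const power_mult_distrib)
  have deg: "2 * m + 2 = 2 * n + 4" "2 * k = 2 * n + 4"
    using assms(4,5) by simp_all
  have "polyfun_form (\<lambda>a s t. X a (s\<^sup>2) (t\<^sup>2) * (s * t)\<^sup>2) (2 * n + 4)"
    using polyfun_form_mult[OF polyfun_form_squares[OF assms(1)] st2] .
  moreover have "polyfun_form (\<lambda>a s t. Y a (s\<^sup>2) (t\<^sup>2) * (s * t)) (2 * n + 4)"
    using polyfun_form_mult[OF polyfun_form_squares[OF assms(2)] st] unfolding deg(1) .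
  moreover have "polyfun_form (\<lambda>a s t. Z a (s\<^sup>2) (t\<^sup>2)) (2 * n + 4)"
    using polyfun_form_squares[OF assms(3)] unfolding deg(2) .
  ultimately show ?thesis by (intro polyfun_form_add)
qed

lemma polyfun_form_conic: "polyfun_form conic_s 7" "polyfun_form conic_t 7"
proof -
  note forms = polyfun_form_coefficient_forms
  have s: "polyfun_form (\<lambda>a s t. s) 1" and t: "polyfun_form (\<lambda>a s t. t) 1"
    using polyfun_form_monomial[of "\<lambda>a. 1" 1 1] polyfun_form_monomial[of "\<lambda>a. 1" 0 1]
    by (simp_all add: polyfun.pf_const)
  have zero: "polyfun_form (\<lambda>a u v. 0) 1"
    using polyfun_form_monomial[of "\<lambda>a. 0" 0 1] by (simp add: polyfun.pf_const)
  have w: "polyfun_form (\<lambda>a s t. 2 * c2 a (s\<^sup>2) (t\<^sup>2) * (s * t) + e3 a (s\<^sup>2) (t\<^sup>2)) 6"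
    using polyfun_form_on_conic[OF zero polyfun_form_scale[OF forms(1), of 2] forms(2)] by simp
  have "polyfun_form (\<lambda>a s t. 2 * (s * (c2_u a (s\<^sup>2) (t\<^sup>2) * (s * t)\<^sup>2 + e3_u a (s\<^sup>2) (t\<^sup>2) * (s * t)
      + d4_u a (s\<^sup>2) (t\<^sup>2))) + t * (2 * c2 a (s\<^sup>2) (t\<^sup>2) * (s * t) + e3 a (s\<^sup>2) (t\<^sup>2))) 7"
    using polyfun_form_mult[OF s polyfun_form_on_conic[OF forms(4,6,8), simplified]] polyfun_form_mult[OF t w]
    by (intro polyfun_form_add polyfun_form_scale) simp_all
  then show "polyfun_form conic_s 7" by (rule polyfun_form_cong) (simp add: conic_s_def)
  have "polyfun_form (\<lambda>a s t. 2 * (t * (c2_v a (s\<^sup>2) (t\<^sup>2) * (s * t)\<^sup>2 + e3_v a (s\<^sup>2) (t\<^sup>2) * (s * t)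
      + d4_v a (s\<^sup>2) (t\<^sup>2))) + s * (2 * c2 a (s\<^sup>2) (t\<^sup>2) * (s * t) + e3 a (s\<^sup>2) (t\<^sup>2))) 7"
    using polyfun_form_mult[OF t polyfun_form_on_conic[OF forms(5,7,9), simplified]] polyfun_form_mult[OF s w]
    by (intro polyfun_form_add polyfun_form_scale) simp_all
  then show "polyfun_form conic_t 7" by (rule polyfun_form_cong) (simp add: conic_t_def)
qed

text \<open>Here c2 = u^2 + v^2, e3 = 0 and d4 = -(u^4 - u^2 v^2 + v^4)/4, so the discriminant is u^6 + v^6.\<close>
definition "discr_witness = (\<lambda>i::nat. if i = 0 \<or> i = 2 then 1 else if i = 9 then 1/4
  else if i = 7 \<or> i = 11 then - 1/4 else (0::complex))"

definition "conic_witness = (\<lambda>i::nat. if i = 7 \<or> i = 11 then 1 else (0::complex))"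

lemma discr_partials_witness: "discr_u discr_witness u v = 6 * u ^ 5" "discr_v discr_witness u v = 6 * v ^ 5"
  by (simp add: discr_u_def discr_v_def c2_expand e3_expand d4_expand c2_u_def c2_v_def e3_u_def e3_v_def
      d4_u_def d4_v_def discr_witness_def, algebra)+

lemma conic_forms_witness: "conic_s conic_witness s t = 8 * s ^ 7" "conic_t conic_witness s t = 8 * t ^ 7"
  by (simp add: conic_s_def conic_t_def c2_expand e3_expand d4_expand c2_u_def c2_v_def e3_u_def e3_v_def
      d4_u_def d4_v_def conic_witness_def, algebra)+

theorem lemma4p5:
  shows "\<exists>P \<in> polyfun. (\<exists>a. P a \<noteq> 0) \<and>
    (\<forall>a. P a \<noteq> 0 \<longrightarrow>
       (\<forall>x. sing_point (quarticK a) x \<longleftrightarrow> (\<exists>t. t \<noteq> 0 \<and> (x = t *s p1 \<or> x = t *s p2)))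
     \<and> A1_point (quarticK a) p1 \<and> A1_point (quarticK a) p2)"
proof -
  have "CARD(10) = 5 + 5" "CARD(14) = 7 + 7" by simp_all
  then obtain R1 R2 where R1: "R1 \<in> polyfun" "R1 discr_witness \<noteq> 0"
    "\<And>a u v. R1 a \<noteq> 0 \<Longrightarrow> discr_v a u v = 0 \<Longrightarrow> discr_u a u v = 0 \<Longrightarrow> u = 0 \<and> v = 0"
    and R2: "R2 \<in> polyfun" "R2 conic_witness \<noteq> 0"
    "\<And>a s t. R2 a \<noteq> 0 \<Longrightarrow> conic_t a s t = 0 \<Longrightarrow> conic_s a s t = 0 \<Longrightarrow> s = 0 \<and> t = 0"
    using polyfun_resultant[OF _ polyfun_form_discr_partials(2,1) discr_partials_witness(2,1)]
      polyfun_resultant[OF _ polyfun_form_conic(2,1) conic_forms_witness(2,1)]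
    by (metis zero_neq_numeral)
  define P where "P a = c2_discriminant a * R1 a * R2 a" for a
  have DR1: "(\<lambda>a. c2_discriminant a * R1 a) \<in> polyfun"
    using polyfun_c2_discriminant R1(1) by (rule polyfun.pf_mult)
  have "c2_discriminant discr_witness * R1 discr_witness \<noteq> 0"
    using R1(2) by (simp add: c2_discriminant_def discr_witness_def)
  then have "\<exists>b. P b \<noteq> 0"
    unfolding P_def by (rule polyfun_mult_nonzero[OF DR1 R2(1) _ R2(2)])
  moreover have "P \<in> polyfun"
    unfolding P_def using DR1 R2(1) by (rule polyfun.pf_mult)
  moreover have "(\<forall>x. sing_point (quarticK a) x \<longleftrightarrow> (\<exists>t. t \<noteq> 0 \<and> (x = t *s p1 \<or> x = t *s p2)))
      \<and> A1_point (quarticK a) p1 \<and> A1_point (quarticK a) p2" if "P a \<noteq> 0" for a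
  proof (rule quarticK_two_A1_points)
    show "c2_discriminant a \<noteq> 0" using that by (simp add: P_def)
    show "u = 0 \<and> v = 0" if "discr_u a u v = 0" "discr_v a u v = 0" for u v
      using R1(3)[of a u v] \<open>P a \<noteq> 0\<close> that by (simp add: P_def)
    show "s = 0 \<and> t = 0" if "conic_s a s t = 0" "conic_t a s t = 0" for s t
      using R2(3)[of a s t] \<open>P a \<noteq> 0\<close> that by (simp add: P_def)
  qed
  ultimately show ?thesis by blast
qed

end
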